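(* Let $(X,\rho)$ be a complete locally compact $\mathbb R$-tree and let $\mathcal B$ be the family of subsets of $\mathcal O_+(X)$ described below. For any $\mathcal U_1,\mathcal U_2\in\mathcal B$ and any order $\tau\in\mathcal U_1\cap\mathcal U_2$ there exists $\mathcal U\in\mathcal B$ with $\tau\in\mathcal U\subset\mathcal U_1\cap\mathcal U_2$.
   Context: An $\mathbb R$-tree is a geodesic metric space in which any two points are joined by a unique segment and $[xy]\subset[xz]\cup[zy]$ for all $x,y,z$. $\mathcal O_+(X)$ is the set of partial orders $\tau$ on $X$ such that any two points have a supremum $x\vee y$, $x\,\tau\, z\,\tau\, y$ implies $\rho(x,z)+\rho(z,y)=\rho(x,y)$, $\rho(x,y)=\rho(x,x\vee y)+\rho(x\vee y,y)$ for all $x,y$, and every upper cone $\{y: x\,\tau\, y\}$ is linearly ordered. $\mathcal O_+^r(X)$ consists of those having a greatest element (root); for $y\in X$, $\preceq_{(y)}$ is the order with root $y$ ($s\preceq_{(y)}t$ iff $t\in[ys]$). $\mathcal O_+^r(X)$ carries the Hausdorff metric $\operatorname{Hd}$ of orders viewed as subsets of $X\times X$ with metric $d_+((x_1,x_2),(y_1,y_2))=\rho(x_1,y_1)+\rho(x_2,y_2)$. $\mathcal B$ consists of all open subsets of $(\mathcal O_+^r(X),\operatorname{Hd})$ together with all sets $\mathcal U_{(x,y)}=\{\tau\in\mathcal O_+(X): x\,\tau\, y\}\setminus\{\preceq_{(y)}\}$ for $x\ne y$ in $X$. *)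

theory Defs
  imports "HOL-Analysis.Analysis"
begin

(* The R-tree X is the whole carrier type 'a (a metric space), rho = dist. *)

definition is_segment :: "'a::metric_space \<Rightarrow> 'a \<Rightarrow> 'a set \<Rightarrow> bool" where
  "is_segment x y S \<longleftrightarrow> (\<exists>\<gamma>::real \<Rightarrow> 'a. \<gamma> 0 = x \<and> \<gamma> (dist x y) = y \<and>
      (\<forall>s\<in>{0..dist x y}. \<forall>t\<in>{0..dist x y}. dist (\<gamma> s) (\<gamma> t) = \<bar>s - t\<bar>) \<and>
      S = \<gamma> ` {0..dist x y})"

definition seg :: "'a::metric_space \<Rightarrow> 'a \<Rightarrow> 'a set" where
  "seg x y = (THE S. is_segment x y S)"

definition R_tree :: "'a::metric_space itself \<Rightarrow> bool" where
  "R_tree _ \<longleftrightarrow> (\<forall>x y::'a. \<exists>!S. is_segment x y S) \<and>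
     (\<forall>x y z::'a. seg x y \<subseteq> seg x z \<union> seg z y)"

definition is_sup :: "('a \<times> 'a) set \<Rightarrow> 'a \<Rightarrow> 'a \<Rightarrow> 'a \<Rightarrow> bool" where
  "is_sup \<tau> x y s \<longleftrightarrow> (x, s) \<in> \<tau> \<and> (y, s) \<in> \<tau> \<and>
     (\<forall>u. (x, u) \<in> \<tau> \<and> (y, u) \<in> \<tau> \<longrightarrow> (s, u) \<in> \<tau>)"

definition osup :: "('a \<times> 'a) set \<Rightarrow> 'a \<Rightarrow> 'a \<Rightarrow> 'a" where
  "osup \<tau> x y = (THE s. is_sup \<tau> x y s)"

definition Oplus :: "('a::metric_space \<times> 'a) set set" where
  "Oplus = {\<tau>. partial_order_on UNIV \<tau> \<and>
      (\<forall>x y. \<exists>s. is_sup \<tau> x y s) \<and>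
      (\<forall>x y z. (x, z) \<in> \<tau> \<and> (z, y) \<in> \<tau> \<longrightarrow> dist x z + dist z y = dist x y) \<and>
      (\<forall>x y. dist x y = dist x (osup \<tau> x y) + dist (osup \<tau> x y) y) \<and>
      (\<forall>x a b. (x, a) \<in> \<tau> \<and> (x, b) \<in> \<tau> \<longrightarrow> (a, b) \<in> \<tau> \<or> (b, a) \<in> \<tau>)}"

definition Oplus_r :: "('a::metric_space \<times> 'a) set set" where
  "Oplus_r = {\<tau> \<in> Oplus. \<exists>r. \<forall>x. (x, r) \<in> \<tau>}"

definition root_order :: "'a::metric_space \<Rightarrow> ('a \<times> 'a) set" where
  "root_order y = {(s, t). t \<in> seg y s}"

definition dplus :: "('a::metric_space \<times> 'a) \<Rightarrow> ('a \<times> 'a) \<Rightarrow> real" where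
  "dplus p q = dist (fst p) (fst q) + dist (snd p) (snd q)"

definition Hd :: "('a::metric_space \<times> 'a) set \<Rightarrow> ('a \<times> 'a) set \<Rightarrow> ereal" where
  "Hd A B = max (SUP a\<in>A. INF b\<in>B. ereal (dplus a b)) (SUP b\<in>B. INF a\<in>A. ereal (dplus a b))"

definition Hd_open :: "('a::metric_space \<times> 'a) set set \<Rightarrow> bool" where
  "Hd_open U \<longleftrightarrow> U \<subseteq> Oplus_r \<and>
     (\<forall>\<tau>\<in>U. \<exists>e>0. \<forall>\<sigma>\<in>Oplus_r. Hd \<tau> \<sigma> < ereal e \<longrightarrow> \<sigma> \<in> U)"

definition U_pair :: "'a::metric_space \<Rightarrow> 'a \<Rightarrow> ('a \<times> 'a) set set" where
  "U_pair x y = {\<tau> \<in> Oplus. (x, y) \<in> \<tau>} - {root_order y}"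

definition Bfam :: "('a::metric_space \<times> 'a) set set set" where
  "Bfam = {U. Hd_open U} \<union> {U_pair x y | x y. x \<noteq> y}"

end

theory Submission
  imports Defs
begin

text \<open>If \<open>\<tau>\<close> has a root \<open>r\<close>, every basic set containing
  \<open>\<tau>\<close> is a Hd-neighbourhood of \<open>\<tau>\<close> in \<open>\<O>\<^sub>+\<^sup>r(X)\<close>: for \<open>\<U>\<^sub>(\<^sub>x\<^sub>,\<^sub>y\<^sub>)\<close> one has \<open>y \<noteq> r\<close>, and a rooted \<open>\<sigma>\<close>
  closer to \<open>\<tau>\<close> than \<open>\<rho>(y, r)\<close> has its root \<open>r'\<close> so close to \<open>r\<close> that \<open>y\<close> still lies on
  \<open>[x r']\<close>, whence \<open>x \<sigma> y\<close>. So \<open>\<U>\<^sub>1 \<inter> \<U>\<^sub>2 \<inter> \<O>\<^sub>+\<^sup>r(X)\<close> is Hd-open. If \<open>\<tau>\<close> has no root, then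
  \<open>\<U>\<^sub>1 = \<U>\<^sub>(\<^sub>x\<^sub>,\<^sub>y\<^sub>)\<close> and \<open>\<U>\<^sub>2 = \<U>\<^sub>(\<^sub>x\<^sub>'\<^sub>,\<^sub>y\<^sub>'\<^sub>)\<close>; with \<open>q = y \<vee> y'\<close> and any \<open>b\<close> strictly above \<open>q\<close>,
  every \<open>\<sigma>\<close> with \<open>q \<sigma> b\<close> orders the segments \<open>[x b]\<close> and \<open>[x' b]\<close> upwards, so
  \<open>\<U>\<^sub>(\<^sub>q\<^sub>,\<^sub>b\<^sub>) \<subseteq> \<U>\<^sub>1 \<inter> \<U>\<^sub>2\<close>.\<close>

abbreviation metric_between :: "'a::metric_space \<Rightarrow> 'a \<Rightarrow> 'a \<Rightarrow> bool" where
  "metric_between x z y \<equiv> dist x z + dist z y = dist x y"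

lemma Oplus_refl: "\<tau> \<in> Oplus \<Longrightarrow> (x, x) \<in> \<tau>"
  unfolding Oplus_def partial_order_on_def preorder_on_def refl_on_def by auto

lemma Oplus_antisym: "\<tau> \<in> Oplus \<Longrightarrow> (x, y) \<in> \<tau> \<Longrightarrow> (y, x) \<in> \<tau> \<Longrightarrow> x = y"
  unfolding Oplus_def partial_order_on_def antisym_def by auto

lemma Oplus_trans: "\<tau> \<in> Oplus \<Longrightarrow> (x, y) \<in> \<tau> \<Longrightarrow> (y, z) \<in> \<tau> \<Longrightarrow> (x, z) \<in> \<tau>"
  unfolding Oplus_def partial_order_on_def preorder_on_def trans_def by blast

lemma Oplus_between: "\<tau> \<in> Oplus \<Longrightarrow> (x, z) \<in> \<tau> \<Longrightarrow> (z, y) \<in> \<tau> \<Longrightarrow> metric_between x z y"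
  unfolding Oplus_def by blast

lemma Oplus_upper_cone_linear:
  "\<tau> \<in> Oplus \<Longrightarrow> (x, a) \<in> \<tau> \<Longrightarrow> (x, b) \<in> \<tau> \<Longrightarrow> (a, b) \<in> \<tau> \<or> (b, a) \<in> \<tau>"
  unfolding Oplus_def by blast

lemma Oplus_osup:
  assumes "\<tau> \<in> Oplus"
  shows "(x, osup \<tau> x y) \<in> \<tau>" and "(y, osup \<tau> x y) \<in> \<tau>"
    and "metric_between x (osup \<tau> x y) y"
proof -
  obtain s where s: "is_sup \<tau> x y s" using assms unfolding Oplus_def by blast
  have "is_sup \<tau> x y (osup \<tau> x y)"
    unfolding osup_def
  proof (rule theI[of _ s])
    fix s' assume "is_sup \<tau> x y s'"
    with s show "s' = s" unfolding is_sup_def using Oplus_antisym[OF assms] by blast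
  qed (fact s)
  then show "(x, osup \<tau> x y) \<in> \<tau>" and "(y, osup \<tau> x y) \<in> \<tau>"
    unfolding is_sup_def by simp_all
  have "\<forall>x y. dist x y = dist x (osup \<tau> x y) + dist (osup \<tau> x y) y"
    using assms unfolding Oplus_def by blast
  then show "metric_between x (osup \<tau> x y) y" by (metis)
qed

lemma Oplus_le_between_left:
  assumes o: "\<sigma> \<in> Oplus" and ab: "(a, b) \<in> \<sigma>" and c: "metric_between a c b"
  shows "(a, c) \<in> \<sigma>"
proof -
  define u where "u = osup \<sigma> a c"
  have au: "(a, u) \<in> \<sigma>" and cu: "(c, u) \<in> \<sigma>" and u: "metric_between a u c"
    using Oplus_osup[OF o, where x=a and y=c] unfolding u_def by auto
  have "dist u c = 0"
  proof (cases "(u, b) \<in> \<sigma>")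
    case True
    then have "metric_between a u b" and "metric_between c u b"
      using Oplus_between[OF o] au cu by blast+
    with c u show ?thesis by (smt (verit) dist_commute zero_le_dist)
  next
    case False
    then have "(b, u) \<in> \<sigma>" using Oplus_upper_cone_linear[OF o au ab] by blast
    then have "metric_between a b u" using Oplus_between[OF o ab] by blast
    with c u show ?thesis by (smt (verit) dist_commute zero_le_dist)
  qed
  then show ?thesis using au by simp
qed

lemma Oplus_le_between_right:
  assumes o: "\<sigma> \<in> Oplus" and ab: "(a, b) \<in> \<sigma>" and c: "metric_between a c b"
  shows "(c, b) \<in> \<sigma>"
proof (rule ccontr)
  assume cb: "(c, b) \<notin> \<sigma>"
  have "(a, c) \<in> \<sigma>" using Oplus_le_between_left[OF assms] .
  then have "(b, c) \<in> \<sigma>" using Oplus_upper_cone_linear[OF o _ ab] cb by blast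
  then have "metric_between a b c" using Oplus_between[OF o ab] by blast
  with c have "b = c" by (smt (verit) dist_commute zero_le_dist zero_less_dist_iff)
  then show False using cb Oplus_refl[OF o] by simp
qed

lemma Oplus_le_if_between_strict:
  assumes o: "\<sigma> \<in> Oplus" and qb: "(q, b) \<in> \<sigma>" and "q \<noteq> b"
    and q: "metric_between x q b"
  shows "(x, b) \<in> \<sigma>"
proof -
  define u where "u = osup \<sigma> x q"
  have xu: "(x, u) \<in> \<sigma>" and qu: "(q, u) \<in> \<sigma>" and u: "metric_between x u q"
    using Oplus_osup[OF o, where x=x and y=q] unfolding u_def by auto
  have "(u, b) \<in> \<sigma>"
  proof (rule ccontr)
    \<comment> \<open>otherwise \<open>b \<in> [q u] \<subseteq> [q x]\<close>, although \<open>q \<noteq> b\<close> lies between \<open>x\<close> and \<open>b\<close>\<close>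
    assume "(u, b) \<notin> \<sigma>"
    then have "(b, u) \<in> \<sigma>" using Oplus_upper_cone_linear[OF o qu qb] by blast
    then have "metric_between q b u" using Oplus_between[OF o qb] by blast
    moreover have "dist x b \<le> dist x u + dist u b" by (rule dist_triangle)
    ultimately have "dist q b \<le> 0" using q u by (smt (verit) dist_commute zero_le_dist)
    then show False using \<open>q \<noteq> b\<close> by simp
  qed
  then show ?thesis using Oplus_trans[OF o xu] by blast
qed

abbreviation isometric_on_interval :: "real \<Rightarrow> (real \<Rightarrow> 'a::metric_space) \<Rightarrow> bool" where
  "isometric_on_interval L \<gamma> \<equiv> \<forall>s\<in>{0..L}. \<forall>t\<in>{0..L}. dist (\<gamma> s) (\<gamma> t) = \<bar>s - t\<bar>"

lemma is_segment_between:
  assumes "is_segment x y S" and "z \<in> S"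
  shows "metric_between x z y"
proof -
  obtain \<gamma> where g0: "\<gamma> 0 = x" and gL: "\<gamma> (dist x y) = y"
    and iso: "isometric_on_interval (dist x y) \<gamma>" and S: "S = \<gamma> ` {0..dist x y}"
    using assms(1) unfolding is_segment_def by blast
  obtain t where t: "t \<in> {0..dist x y}" and z: "z = \<gamma> t" using assms(2) S by blast
  have "dist x z = t" using iso[rule_format, of 0 t] t g0 z by auto
  moreover have "dist z y = dist x y - t" using iso[rule_format, of t "dist x y"] t gL z by auto
  ultimately show ?thesis by simp
qed

lemma is_segment_endpoints:
  assumes "is_segment x y S"
  shows "x \<in> S" and "y \<in> S"
proof -
  obtain \<gamma> where "\<gamma> 0 = x" "\<gamma> (dist x y) = y" "S = \<gamma> ` {0..dist x y}"
    using assms unfolding is_segment_def by blast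
  then show "x \<in> S" and "y \<in> S" by (metis atLeastAtMost_iff image_eqI order_refl zero_le_dist)+
qed

definition join_at :: "real \<Rightarrow> (real \<Rightarrow> 'a) \<Rightarrow> (real \<Rightarrow> 'a) \<Rightarrow> real \<Rightarrow> 'a" where
  "join_at m g1 g2 t = (if t \<le> m then g1 t else g2 (t - m))"

lemma join_at_dist_across:
  assumes iso1: "isometric_on_interval m g1" and iso2: "isometric_on_interval n g2"
    and mid: "g1 m = g2 0" and L: "dist (g1 0) (g2 n) = m + n"
    and s: "0 \<le> s" "s \<le> m" and t: "m \<le> t" "t \<le> m + n"
  shows "dist (g1 s) (g2 (t - m)) = t - s"
proof -
  have d1: "dist (g1 s) (g2 0) = m - s" using iso1[rule_format, of s m] s mid by auto
  have d2: "dist (g2 0) (g2 (t - m)) = t - m" using iso2[rule_format, of 0 "t - m"] t by auto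
  have d3: "dist (g1 0) (g1 s) = s" using iso1[rule_format, of 0 s] s by auto
  have d4: "dist (g2 (t - m)) (g2 n) = n - (t - m)" using iso2[rule_format, of "t - m" n] t by auto
  have "dist (g1 s) (g2 (t - m)) \<le> dist (g1 s) (g2 0) + dist (g2 0) (g2 (t - m))"
    by (rule dist_triangle)
  moreover have "dist (g1 0) (g2 n) \<le> dist (g1 0) (g1 s) + dist (g1 s) (g2 (t - m)) + dist (g2 (t - m)) (g2 n)"
    using dist_triangle[where x="g1 0" and y="g1 s" and z="g2 n"]
      dist_triangle[where x="g1 s" and y="g2 (t - m)" and z="g2 n"] by linarith
  ultimately show ?thesis using d1 d2 d3 d4 L by linarith
qed

lemma join_at_isometric:
  assumes iso1: "isometric_on_interval m g1" and iso2: "isometric_on_interval n g2"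
    and mid: "g1 m = g2 0" and L: "dist (g1 0) (g2 n) = m + n"
  shows "isometric_on_interval (m + n) (join_at m g1 g2)"
proof -
  have iso: "dist (join_at m g1 g2 s) (join_at m g1 g2 t) = \<bar>s - t\<bar>"
    if s: "0 \<le> s" and st: "s \<le> t" and t: "t \<le> m + n" for s t
  proof -
    consider "t \<le> m" | "s \<le> m" "m < t" | "m < s" by linarith
    then show ?thesis
    proof cases
      case 1
      then show ?thesis using iso1[rule_format, of s t] s st unfolding join_at_def by simp
    next
      case 2
      then show ?thesis
        using join_at_dist_across[OF iso1 iso2 mid L, of s t] s st t unfolding join_at_def by simp
    next
      case 3
      then show ?thesis using iso2[rule_format, of "s - m" "t - m"] st t unfolding join_at_def by simp
    qed
  qed
  show ?thesis
  proof (intro ballI)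
    fix s t assume "s \<in> {0..m+n}" "t \<in> {0..m+n}"
    then show "dist (join_at m g1 g2 s) (join_at m g1 g2 t) = \<bar>s - t\<bar>"
      using iso[of s t] iso[of t s] by (cases "s \<le> t") (auto simp: dist_commute)
  qed
qed

lemma join_at_image:
  assumes mid: "g1 m = g2 0" and "0 \<le> m" "0 \<le> n"
  shows "join_at m g1 g2 ` {0..m+n} = g1 ` {0..m} \<union> g2 ` {0..n}"
proof (intro equalityI subsetI)
  fix p assume "p \<in> join_at m g1 g2 ` {0..m+n}"
  then obtain t where "t \<in> {0..m+n}" "p = join_at m g1 g2 t" by blast
  then show "p \<in> g1 ` {0..m} \<union> g2 ` {0..n}" unfolding join_at_def by (cases "t \<le> m") auto
next
  fix p assume "p \<in> g1 ` {0..m} \<union> g2 ` {0..n}"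
  then consider s where "s \<in> {0..m}" "p = g1 s" | s where "s \<in> {0..n}" "p = g2 s" "s \<noteq> 0"
    | "p = g2 0"
    by blast
  then show "p \<in> join_at m g1 g2 ` {0..m+n}"
  proof cases
    case (1 s)
    then show ?thesis using \<open>0 \<le> n\<close> by (intro rev_image_eqI[of s]) (auto simp: join_at_def)
  next
    case (2 s)
    then show ?thesis using \<open>0 \<le> m\<close> by (intro rev_image_eqI[of "s + m"]) (auto simp: join_at_def)
  next
    case 3
    then show ?thesis using assms by (intro rev_image_eqI[of m]) (auto simp: join_at_def)
  qed
qed

lemma is_segment_append:
  assumes A: "is_segment x z A" and B: "is_segment z y B" and z: "metric_between x z y"
  shows "is_segment x y (A \<union> B)"
proof -
  obtain g1 where g1: "g1 0 = x" "g1 (dist x z) = z" "isometric_on_interval (dist x z) g1"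
    and A_eq: "A = g1 ` {0..dist x z}"
    using A unfolding is_segment_def by blast
  obtain g2 where g2: "g2 0 = z" "g2 (dist z y) = y" "isometric_on_interval (dist z y) g2"
    and B_eq: "B = g2 ` {0..dist z y}"
    using B unfolding is_segment_def by blast
  let ?\<gamma> = "join_at (dist x z) g1 g2"
  have "?\<gamma> 0 = x" using g1 by (simp add: join_at_def)
  moreover have "?\<gamma> (dist x z + dist z y) = y"
    using g1 g2 by (cases "dist z y = 0") (auto simp: join_at_def)
  moreover have "isometric_on_interval (dist x z + dist z y) ?\<gamma>"
    using join_at_isometric[OF g1(3) g2(3)] g1 g2 z by simp
  moreover have "?\<gamma> ` {0..dist x z + dist z y} = A \<union> B"
    unfolding A_eq B_eq using join_at_image[of g1 "dist x z" g2 "dist z y"] g1 g2 by simp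
  ultimately show ?thesis unfolding is_segment_def z[symmetric] by blast
qed

lemma R_tree_is_segment_seg:
  assumes "R_tree TYPE('a::metric_space)"
  shows "is_segment (x::'a) y (seg x y)"
proof -
  have "\<exists>!S. is_segment x y S" using assms unfolding R_tree_def by blast
  then show ?thesis unfolding seg_def by (rule theI')
qed

lemma R_tree_seg_unique:
  assumes "R_tree TYPE('a::metric_space)" and "is_segment (x::'a) y S"
  shows "S = seg x y"
  using assms R_tree_is_segment_seg[OF assms(1), of x y] unfolding R_tree_def by blast

lemma R_tree_seg_subset:
  assumes "R_tree TYPE('a::metric_space)"
  shows "seg (x::'a) y \<subseteq> seg x z \<union> seg z y"
  using assms unfolding R_tree_def by blast

lemma R_tree_seg_split:
  assumes R: "R_tree TYPE('a::metric_space)" and "metric_between x (z::'a) y"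
  shows "seg x y = seg x z \<union> seg z y"
  using R_tree_seg_unique[OF R is_segment_append] R_tree_is_segment_seg[OF R] assms(2) by metis

lemma R_tree_mem_seg_iff:
  assumes R: "R_tree TYPE('a::metric_space)"
  shows "(z::'a) \<in> seg x y \<longleftrightarrow> metric_between x z y"
proof
  assume "z \<in> seg x y"
  then show "metric_between x z y" using is_segment_between R_tree_is_segment_seg[OF R] by blast
next
  assume "metric_between x z y"
  then show "z \<in> seg x y"
    using R_tree_seg_split[OF R] is_segment_endpoints(1)[OF R_tree_is_segment_seg[OF R]] by blast
qed

lemma root_order_top:
  assumes "R_tree TYPE('a::metric_space)"
  shows "((s::'a), y) \<in> root_order y"
  unfolding root_order_def using is_segment_endpoints(1)[OF R_tree_is_segment_seg[OF assms]] by simp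

lemma Oplus_eq_root_order:
  assumes R: "R_tree TYPE('a::metric_space)" and o: "\<tau> \<in> Oplus"
    and r: "\<And>s. (s, r) \<in> \<tau>"
  shows "\<tau> = root_order (r::'a)"
proof (intro set_eqI iffI)
  fix p assume p: "p \<in> \<tau>"
  obtain s t where st: "p = (s, t)" by (cases p)
  have "metric_between s t r" using Oplus_between[OF o _ r] p st by blast
  then have "metric_between r t s" by (simp add: dist_commute add.commute)
  then show "p \<in> root_order r" using R_tree_mem_seg_iff[OF R] st unfolding root_order_def by simp
next
  fix p assume p: "p \<in> root_order r"
  obtain s t where st: "p = (s, t)" by (cases p)
  have "metric_between r t s" using R_tree_mem_seg_iff[OF R] p st unfolding root_order_def by simp
  then have "metric_between s t r" by (simp add: dist_commute add.commute)
  then show "p \<in> \<tau>" using Oplus_le_between_left[OF o r] st by simp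
qed

lemma Hd_less_imp_dplus_less:
  assumes "Hd \<tau> \<sigma> < ereal e" and "b \<in> \<sigma>"
  shows "\<exists>a\<in>\<tau>. dplus a b < e"
proof -
  have "(INF a\<in>\<tau>. ereal (dplus a b)) \<le> (SUP b\<in>\<sigma>. INF a\<in>\<tau>. ereal (dplus a b))"
    using assms(2) by (rule SUP_upper)
  also have "\<dots> \<le> Hd \<tau> \<sigma>" unfolding Hd_def by simp
  finally have "(INF a\<in>\<tau>. ereal (dplus a b)) < ereal e" using assms(1) by simp
  then show ?thesis by (simp add: INF_less_iff)
qed

lemma Hd_less_imp_roots_dist_less:
  assumes o: "\<tau> \<in> Oplus" and r: "\<And>s. (s, r) \<in> \<tau>" and r': "\<And>s. (s, r') \<in> \<sigma>"
    and hd: "Hd \<tau> \<sigma> < ereal e"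
  shows "dist r r' < e"
proof -
  obtain s t where st: "(s, t) \<in> \<tau>" and near: "dist s r + dist t r' < e"
    using Hd_less_imp_dplus_less[OF hd r'[of r]] unfolding dplus_def by force
  have "metric_between s t r" using Oplus_between[OF o st r] .
  then have "dist t r \<le> dist s r" by (smt (verit) zero_le_dist)
  moreover have "dist r r' \<le> dist r t + dist t r'" by (rule dist_triangle)
  ultimately show ?thesis using near by (simp add: dist_commute)
qed

lemma U_pair_Hd_nhd:
  assumes R: "R_tree TYPE('a::metric_space)"
    and t: "\<tau> \<in> Oplus_r" and u: "\<tau> \<in> U_pair x (y::'a)"
  shows "\<exists>e>0. \<forall>\<sigma>\<in>Oplus_r. Hd \<tau> \<sigma> < ereal e \<longrightarrow> \<sigma> \<in> U_pair x y"
proof -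
  have o: "\<tau> \<in> Oplus" using t unfolding Oplus_r_def by blast
  obtain r where r: "\<And>s. (s, r) \<in> \<tau>" using t unfolding Oplus_r_def by blast
  have xy: "(x, y) \<in> \<tau>" and not_root: "\<tau> \<noteq> root_order y" using u unfolding U_pair_def by auto
  have "y \<noteq> r" using not_root Oplus_eq_root_order[OF R o r] by blast
  have y_seg: "y \<in> seg x r" using R_tree_mem_seg_iff[OF R] Oplus_between[OF o xy r] by blast
  show ?thesis
  proof (intro exI conjI ballI impI)
    show "dist y r > 0" using \<open>y \<noteq> r\<close> by simp
    fix \<sigma> assume s: "\<sigma> \<in> Oplus_r" and hd: "Hd \<tau> \<sigma> < ereal (dist y r)"
    have os: "\<sigma> \<in> Oplus" using s unfolding Oplus_r_def by blast
    obtain r' where r': "\<And>s. (s, r') \<in> \<sigma>" using s unfolding Oplus_r_def by blast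
    have rr': "dist r r' < dist y r" using Hd_less_imp_roots_dist_less[OF o r r' hd] .
    have "y \<notin> seg r' r"
    proof
      assume "y \<in> seg r' r"
      then have "metric_between r' y r" using R_tree_mem_seg_iff[OF R] by blast
      then show False using rr' by (smt (verit) dist_commute zero_le_dist)
    qed
    then have "y \<in> seg x r'" using y_seg R_tree_seg_subset[OF R, of x r r'] by blast
    then have xy_\<sigma>: "(x, y) \<in> \<sigma>" using Oplus_le_between_left[OF os r'] R_tree_mem_seg_iff[OF R] by blast
    have "y \<noteq> r'" using rr' by (auto simp: dist_commute)
    then have "\<sigma> \<noteq> root_order y" using Oplus_antisym[OF os r'[of y]] root_order_top[OF R] by blast
    then show "\<sigma> \<in> U_pair x y" using xy_\<sigma> os unfolding U_pair_def by simp
  qed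
qed

lemma Bfam_not_Hd_open: "U \<in> Bfam \<Longrightarrow> \<not> Hd_open U \<Longrightarrow> \<exists>x y. U = U_pair x y"
  unfolding Bfam_def by blast

lemma Bfam_Hd_nhd:
  assumes R: "R_tree TYPE('a::metric_space)"
    and U: "U \<in> (Bfam :: ('a \<times> 'a) set set set)" and t: "\<tau> \<in> U" "\<tau> \<in> Oplus_r"
  shows "\<exists>e>0. \<forall>\<sigma>\<in>Oplus_r. Hd \<tau> \<sigma> < ereal e \<longrightarrow> \<sigma> \<in> U"
proof (cases "Hd_open U")
  case True
  then show ?thesis using t unfolding Hd_open_def by blast
next
  case False
  then obtain x y where "U = U_pair x y" using Bfam_not_Hd_open U by blast
  then show ?thesis using U_pair_Hd_nhd[OF R t(2)] t(1) by simp
qed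

lemma Hd_open_Int_Oplus_r:
  assumes "\<And>\<tau>. \<tau> \<in> U1 \<inter> Oplus_r \<Longrightarrow> \<exists>e>0. \<forall>\<sigma>\<in>Oplus_r. Hd \<tau> \<sigma> < ereal e \<longrightarrow> \<sigma> \<in> U1"
    and "\<And>\<tau>. \<tau> \<in> U2 \<inter> Oplus_r \<Longrightarrow> \<exists>e>0. \<forall>\<sigma>\<in>Oplus_r. Hd \<tau> \<sigma> < ereal e \<longrightarrow> \<sigma> \<in> U2"
  shows "Hd_open (U1 \<inter> U2 \<inter> Oplus_r)"
  unfolding Hd_open_def
proof (intro conjI ballI)
  fix \<tau> assume t: "\<tau> \<in> U1 \<inter> U2 \<inter> Oplus_r"
  obtain e1 where e1: "e1 > 0" "\<forall>\<sigma>\<in>Oplus_r. Hd \<tau> \<sigma> < ereal e1 \<longrightarrow> \<sigma> \<in> U1"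
    using assms(1) t by blast
  obtain e2 where e2: "e2 > 0" "\<forall>\<sigma>\<in>Oplus_r. Hd \<tau> \<sigma> < ereal e2 \<longrightarrow> \<sigma> \<in> U2"
    using assms(2) t by blast
  show "\<exists>e>0. \<forall>\<sigma>\<in>Oplus_r. Hd \<tau> \<sigma> < ereal e \<longrightarrow> \<sigma> \<in> U1 \<inter> U2 \<inter> Oplus_r"
  proof (intro exI[of _ "min e1 e2"] conjI ballI impI)
    fix \<sigma> assume s: "\<sigma> \<in> Oplus_r" and h: "Hd \<tau> \<sigma> < ereal (min e1 e2)"
    have "Hd \<tau> \<sigma> < ereal e1" and "Hd \<tau> \<sigma> < ereal e2"
      using h by (auto elim: less_le_trans)
    then show "\<sigma> \<in> U1 \<inter> U2 \<inter> Oplus_r" using e1(2) e2(2) s by simp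
  qed (use e1 e2 in simp)
qed blast

lemma U_pair_subset:
  assumes R: "R_tree TYPE('a::metric_space)" and o: "\<tau> \<in> Oplus"
    and xy: "(x, y) \<in> \<tau>" and yq: "(y, q) \<in> \<tau>" and qb: "(q, b) \<in> \<tau>" and "q \<noteq> (b::'a)"
  shows "U_pair q b \<subseteq> U_pair x y"
proof
  fix \<sigma> assume s: "\<sigma> \<in> U_pair q b"
  have os: "\<sigma> \<in> Oplus" and qb_\<sigma>: "(q, b) \<in> \<sigma>" using s unfolding U_pair_def by auto
  have xq: "(x, q) \<in> \<tau>" using Oplus_trans[OF o xy yq] .
  have yb: "(y, b) \<in> \<tau>" using Oplus_trans[OF o yq qb] .
  have xb_\<sigma>: "(x, b) \<in> \<sigma>"
    using Oplus_le_if_between_strict[OF os qb_\<sigma> \<open>q \<noteq> b\<close> Oplus_between[OF o xq qb]] .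
  have y: "metric_between x y b" using Oplus_between[OF o xy yb] .
  have xy_\<sigma>: "(x, y) \<in> \<sigma>" using Oplus_le_between_left[OF os xb_\<sigma> y] .
  have yb_\<sigma>: "(y, b) \<in> \<sigma>" using Oplus_le_between_right[OF os xb_\<sigma> y] .
  have "y \<noteq> b" using Oplus_antisym[OF o yq] qb \<open>q \<noteq> b\<close> by blast
  then have "\<sigma> \<noteq> root_order y" using Oplus_antisym[OF os yb_\<sigma>] root_order_top[OF R] by blast
  then show "\<sigma> \<in> U_pair x y" using os xy_\<sigma> unfolding U_pair_def by simp
qed

lemma U_pair_refine_unrooted:
  assumes R: "R_tree TYPE('a::metric_space)" and "\<tau> \<notin> Oplus_r"
    and "\<tau> \<in> U_pair x y \<inter> U_pair x' (y'::'a)"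
  shows "\<exists>q b. q \<noteq> b \<and> \<tau> \<in> U_pair q b \<and> U_pair q b \<subseteq> U_pair x y \<inter> U_pair x' y'"
proof -
  have o: "\<tau> \<in> Oplus" and xy: "(x, y) \<in> \<tau>" and xy': "(x', y') \<in> \<tau>"
    using assms(3) unfolding U_pair_def by auto
  define q where "q = osup \<tau> y y'"
  have yq: "(y, q) \<in> \<tau>" and yq': "(y', q) \<in> \<tau>"
    using Oplus_osup[OF o, where x=y and y=y'] unfolding q_def by auto
  obtain z where z: "(z, q) \<notin> \<tau>" using assms(2) o unfolding Oplus_r_def by auto
  define b where "b = osup \<tau> q z"
  have qb: "(q, b) \<in> \<tau>" and zb: "(z, b) \<in> \<tau>"
    using Oplus_osup[OF o, where x=q and y=z] unfolding b_def by auto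
  have "\<tau> \<noteq> root_order b" using assms(2) o root_order_top[OF R] unfolding Oplus_r_def by blast
  then have "\<tau> \<in> U_pair q b" using o qb unfolding U_pair_def by simp
  moreover have "q \<noteq> b" using z zb by blast
  moreover have "U_pair q b \<subseteq> U_pair x y \<inter> U_pair x' y'"
    using U_pair_subset[OF R o xy yq qb \<open>q \<noteq> b\<close>] U_pair_subset[OF R o xy' yq' qb \<open>q \<noteq> b\<close>] by blast
  ultimately show ?thesis by blast
qed

theorem lemma2:
  assumes "R_tree TYPE('a::metric_space)"
    and "complete (UNIV :: 'a set)"
    and "locally compact (UNIV :: 'a set)"
    and "U1 \<in> (Bfam :: ('a \<times> 'a) set set set)" and "U2 \<in> Bfam"
    and "\<tau> \<in> U1 \<inter> U2"
  shows "\<exists>U\<in>Bfam. \<tau> \<in> U \<and> U \<subseteq> U1 \<inter> U2"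
proof (cases "\<tau> \<in> Oplus_r")
  case True
  have "Hd_open (U1 \<inter> U2 \<inter> Oplus_r)"
    by (rule Hd_open_Int_Oplus_r; rule Bfam_Hd_nhd[OF assms(1)]) (use assms(4,5) in auto)
  then have "U1 \<inter> U2 \<inter> Oplus_r \<in> Bfam" by (simp add: Bfam_def)
  then show ?thesis using True assms(6) by (intro bexI[of _ "U1 \<inter> U2 \<inter> Oplus_r"]) auto
next
  case False
  then have "\<not> Hd_open U1" and "\<not> Hd_open U2" using assms(6) unfolding Hd_open_def by auto
  then obtain x y x' y' where "U1 = U_pair x y" and "U2 = U_pair x' y'"
    using Bfam_not_Hd_open assms(4,5) by metis
  then obtain q b where "q \<noteq> b" "\<tau> \<in> U_pair q b" "U_pair q b \<subseteq> U1 \<inter> U2"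
    using U_pair_refine_unrooted[OF assms(1) False] assms(6) by blast
  then show ?thesis unfolding Bfam_def by blast
qed

end
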